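(* Let $(\alpha_1,\alpha_2,\alpha_3)\in[0,1]^3$ with $\alpha_1\ge\alpha_2\ge\alpha_3$. If any of the following holds, then $(\alpha_1,\alpha_2,\alpha_3)$ is not a forcing triple: (a) $\alpha_1<\frac{1+\tau^2}{2}=\frac{52-4\sqrt7}{81}$; (b) $\alpha_2<\frac14$; (c) $\alpha_1+\alpha_2<1$; (d) $\alpha_1=x^2+y^2$ and $\alpha_2=x^2+(1-x-y)^2$ for some nonnegative reals $x,y$ with $x+y\le1$ and $2x^2+(1-x-y)^2<1$.
   Context: $\tau=\frac{4-\sqrt7}{9}$. A $3$-colouring template on an $n$-set $V$ is a triple $(G_1,G_2,G_3)$ of graphs on $V$ (edge sets may overlap). A rainbow triangle is a triple of distinct vertices whose three pairs lie in the three distinct colour classes, one pair per class. A triple $(\alpha_1,\alpha_2,\alpha_3)\in[0,1]^3$ is a forcing triple if for all sufficiently large $n$, every $n$-vertex $3$-colouring template with $|E(G_i)|>\min(\frac{\alpha_i}{2}n^2,\binom n2-1)$ for each $i$ contains a rainbow triangle. *)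

theory Defs
  imports Complex_Main
begin

definition tau :: real where
  "tau = (4 - sqrt 7) / 9"

definition graph_on :: "nat \<Rightarrow> nat set set \<Rightarrow> bool" where
  "graph_on n E \<longleftrightarrow> (\<forall>e\<in>E. e \<subseteq> {..<n} \<and> card e = 2)"

text \<open>A rainbow triangle: three distinct vertices whose three pairs lie in the three
  distinct colour classes, one pair per class (the ordering of a, b, c absorbs the choice
  of which pair goes to which class).\<close>
definition has_rainbow_triangle :: "nat set set \<Rightarrow> nat set set \<Rightarrow> nat set set \<Rightarrow> bool" where
  "has_rainbow_triangle G1 G2 G3 \<longleftrightarrow>
     (\<exists>a b c. a \<noteq> b \<and> b \<noteq> c \<and> a \<noteq> c \<and>
        {a, b} \<in> G1 \<and> {b, c} \<in> G2 \<and> {a, c} \<in> G3)"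

definition edge_threshold :: "real \<Rightarrow> nat \<Rightarrow> real" where
  "edge_threshold \<alpha> n = min (\<alpha> / 2 * (real n)^2) (real (n choose 2) - 1)"

definition forcing_triple :: "real \<Rightarrow> real \<Rightarrow> real \<Rightarrow> bool" where
  "forcing_triple \<alpha>1 \<alpha>2 \<alpha>3 \<longleftrightarrow>
     (\<exists>N. \<forall>n\<ge>N. \<forall>G1 G2 G3.
        graph_on n G1 \<and> graph_on n G2 \<and> graph_on n G3 \<and>
        real (card G1) > edge_threshold \<alpha>1 n \<and>
        real (card G2) > edge_threshold \<alpha>2 n \<and>
        real (card G3) > edge_threshold \<alpha>3 n
        \<longrightarrow> has_rainbow_triangle G1 G2 G3)"

end

theory Submission
  imports Defs
begin

text \<open>Split the vertex set into blocks \<open>X, Y, Z\<close> of relative sizes \<open>x, y, z = 1 - x - y\<close> and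
  colour with \<open>G1 = K(X) \<union> K(Y)\<close>, \<open>G2 = K(X) \<union> K(Z)\<close> and \<open>G3\<close> the complement of \<open>K(X)\<close>.
  A rainbow triangle \<open>abc\<close> would need \<open>ab\<close> and \<open>bc\<close> inside blocks, hence (the blocks being
  disjoint) \<open>a, b, c\<close> all in \<open>X\<close>, contradicting \<open>ac \<in> G3\<close>. The densities are
  \<open>x\<^sup>2 + y\<^sup>2\<close>, \<open>x\<^sup>2 + z\<^sup>2\<close>, \<open>1 - x\<^sup>2\<close> up to \<open>O(n)\<close> edges, so every triple strictly below
  such densities is not forcing; forcing is invariant under cyclic rotation of the colours.
  Each of (a)--(c) is a choice of \<open>(x, y)\<close>; in (d) the densities are met with equality and a
  small shift of mass from \<open>Y \<union> Z\<close> into \<open>X\<close> makes them strict.\<close>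

definition complete_graph :: "nat set \<Rightarrow> nat set set" where
  "complete_graph S = {e. e \<subseteq> S \<and> card e = 2}"

lemma finite_complete_graph: "finite S \<Longrightarrow> finite (complete_graph S)"
  unfolding complete_graph_def by (rule finite_subset[of _ "Pow S"]) auto

lemma card_complete_graph: "finite S \<Longrightarrow> card (complete_graph S) = card S choose 2"
  unfolding complete_graph_def by (rule n_subsets)

lemma doubleton_in_complete_graph_iff:
  "{a, b} \<in> complete_graph S \<longleftrightarrow> a \<noteq> b \<and> a \<in> S \<and> b \<in> S"
  unfolding complete_graph_def by (cases "a = b") auto

lemma complete_graph_mono: "X \<subseteq> Y \<Longrightarrow> complete_graph X \<subseteq> complete_graph Y"
  unfolding complete_graph_def by auto

lemma disjoint_complete_graphs:
  "X \<inter> Y = {} \<Longrightarrow> complete_graph X \<inter> complete_graph Y = {}"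
  unfolding complete_graph_def by (auto simp: card_2_iff)

lemma card_Un_complete_graphs:
  assumes "finite X" "finite Y" "X \<inter> Y = {}"
  shows "card (complete_graph X \<union> complete_graph Y) = (card X choose 2) + (card Y choose 2)"
  using assms
  by (simp add: card_Un_disjoint finite_complete_graph disjoint_complete_graphs card_complete_graph)

lemma card_Diff_complete_graphs:
  assumes "finite Y" "X \<subseteq> Y"
  shows "card (complete_graph Y - complete_graph X) = (card Y choose 2) - (card X choose 2)"
  using assms finite_subset[OF assms(2)]
  by (simp add: card_Diff_subset finite_complete_graph complete_graph_mono card_complete_graph)

lemma graph_on_complete_graph: "S \<subseteq> {..<n} \<Longrightarrow> graph_on n (complete_graph S)"
  unfolding graph_on_def complete_graph_def by auto

lemma graph_on_Un: "graph_on n A \<Longrightarrow> graph_on n B \<Longrightarrow> graph_on n (A \<union> B)"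
  unfolding graph_on_def by auto

lemma graph_on_Diff: "graph_on n A \<Longrightarrow> graph_on n (A - B)"
  unfolding graph_on_def by auto

lemma has_rainbow_triangle_rotate:
  assumes "has_rainbow_triangle G3 G1 G2"
  shows "has_rainbow_triangle G1 G2 G3"
proof -
  obtain a b c where "a \<noteq> b" "b \<noteq> c" "a \<noteq> c" "{a, b} \<in> G3" "{b, c} \<in> G1" "{a, c} \<in> G2"
    using assms unfolding has_rainbow_triangle_def by blast
  then show ?thesis
    unfolding has_rainbow_triangle_def by (intro exI[of _ b] exI[of _ c] exI[of _ a]) (auto simp: insert_commute)
qed

lemma no_rainbow_triangle_block_template:
  assumes "X \<inter> Y = {}" "X \<inter> Z = {}" "Y \<inter> Z = {}"
  shows "\<not> has_rainbow_triangle (complete_graph X \<union> complete_graph Y)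
            (complete_graph X \<union> complete_graph Z) (complete_graph V - complete_graph X)"
proof
  assume "has_rainbow_triangle (complete_graph X \<union> complete_graph Y)
            (complete_graph X \<union> complete_graph Z) (complete_graph V - complete_graph X)"
  then obtain a b c where "a \<noteq> b" "b \<noteq> c" "a \<noteq> c"
      "{a, b} \<in> complete_graph X \<union> complete_graph Y" "{b, c} \<in> complete_graph X \<union> complete_graph Z"
      "{a, c} \<notin> complete_graph X"
    unfolding has_rainbow_triangle_def by blast
  then have "(a \<in> X \<and> b \<in> X) \<or> (a \<in> Y \<and> b \<in> Y)" "(b \<in> X \<and> c \<in> X) \<or> (b \<in> Z \<and> c \<in> Z)"
      "\<not> (a \<in> X \<and> c \<in> X)"
    by (auto simp: doubleton_in_complete_graph_iff)
  then show False using assms by blast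
qed

lemma two_mult_choose_two: "2 * real (m choose 2) = real m * (real m - 1)"
proof (induction m)
  case (Suc m)
  have "Suc m choose 2 = m + (m choose 2)"
    by (simp add: numeral_2_eq_2)
  then show ?case using Suc by (simp add: algebra_simps)
qed simp

lemma two_mult_choose_two_ge:
  fixes p :: real and m n :: nat
  assumes "0 \<le> p" "p \<le> 1" "p * n - 1 \<le> real m"
  shows "p^2 * (real n)^2 - 3 * real n \<le> 2 * real (m choose 2)"
proof -
  define u where "u = p * n"
  have "u \<le> n" unfolding u_def using assms by (simp add: mult_left_le_one_le)
  have "u^2 - 3 * u \<le> real m * (real m - 1)"
  proof (cases "u \<le> 3")
    case True
    moreover have "u \<ge> 0" using assms by (simp add: u_def)
    ultimately have "u^2 - 3 * u \<le> 0"
      by (simp add: power2_eq_square mult_right_mono)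
    moreover have "real m * (real m - 1) \<ge> 0" by (cases m) auto
    ultimately show ?thesis by linarith
  next
    case False
    then have "(u - 1) * (u - 2) \<le> real m * (real m - 1)"
      using assms by (intro mult_mono) (auto simp: u_def)
    then show ?thesis by (simp add: power2_eq_square algebra_simps)
  qed
  then show ?thesis using \<open>u \<le> n\<close> two_mult_choose_two[of m] by (simp add: u_def power_mult_distrib)
qed

lemma eventually_linear_less_quadratic:
  fixes c g :: real
  assumes "g > 0"
  shows "\<forall>\<^sub>F n in sequentially. c * real n < g * (real n)^2"
proof -
  have "c * real n < g * (real n)^2" if "n > nat \<lceil>c / g\<rceil>" for n
  proof -
    have "c / g < real n" using that by linarith
    then have "c < g * real n" using assms by (simp add: pos_divide_less_eq mult.commute)
    then show ?thesis using that by (simp add: power2_eq_square)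
  qed
  then show ?thesis using eventually_gt_at_top by (rule eventually_mono[rotated])
qed

lemma block_template_exists:
  fixes x y :: real and n :: nat
  assumes "0 \<le> x" "0 \<le> y" "x + y \<le> 1"
  obtains G1 G2 G3 where "graph_on n G1" "graph_on n G2" "graph_on n G3"
    "\<not> has_rainbow_triangle G1 G2 G3"
    "(x^2 + y^2) * (real n)^2 - 6 * real n \<le> 2 * real (card G1)"
    "(x^2 + (1 - x - y)^2) * (real n)^2 - 6 * real n \<le> 2 * real (card G2)"
    "(1 - x^2) * (real n)^2 - real n \<le> 2 * real (card G3)"
    "x = 0 \<Longrightarrow> card G3 = n choose 2"
proof -
  define kx where "kx = nat \<lfloor>x * n\<rfloor>"
  define ky where "ky = nat \<lfloor>y * n\<rfloor>"
  have kx: "x * n - 1 \<le> real kx" "real kx \<le> x * n" and ky: "y * n - 1 \<le> real ky" "real ky \<le> y * n"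
    unfolding kx_def ky_def using assms by auto
  have "real kx + real ky \<le> real n"
    using kx ky assms mult_right_mono[of "x + y" 1 "real n"] by (simp add: algebra_simps)
  then have kxy: "kx + ky \<le> n" by linarith
  define X where "X = {..<kx}"
  define Y where "Y = {kx..<kx + ky}"
  define Z where "Z = {kx + ky..<n}"
  define V where "V = {..<n}"
  have cards: "card X = kx" "card Y = ky" "card Z = n - (kx + ky)" "card V = n"
    unfolding X_def Y_def Z_def V_def by auto
  have kz: "(1 - x - y) * n - 1 \<le> real (card Z)"
    using cards kx ky kxy by (simp add: algebra_simps)
  have finite: "finite X" "finite Y" "finite Z" "finite V"
    unfolding X_def Y_def Z_def V_def by auto
  have disjoint: "X \<inter> Y = {}" "X \<inter> Z = {}" "Y \<inter> Z = {}"
    unfolding X_def Y_def Z_def by auto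
  have sub: "X \<subseteq> V" "Y \<subseteq> V" "Z \<subseteq> V"
    unfolding X_def Y_def Z_def V_def using kxy by auto
  define G1 where "G1 = complete_graph X \<union> complete_graph Y"
  define G2 where "G2 = complete_graph X \<union> complete_graph Z"
  define G3 where "G3 = complete_graph V - complete_graph X"
  show thesis
  proof
    show "graph_on n G1" "graph_on n G2" "graph_on n G3"
      unfolding G1_def G2_def G3_def using sub
      by (auto intro!: graph_on_Un graph_on_Diff graph_on_complete_graph simp: V_def)
    show "\<not> has_rainbow_triangle G1 G2 G3"
      unfolding G1_def G2_def G3_def using disjoint by (rule no_rainbow_triangle_block_template)
    have "x \<le> 1" "y \<le> 1" "1 - x - y \<le> 1" using assms by auto
    then have "x^2 * (real n)^2 - 3 * real n \<le> 2 * real (card X choose 2)"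
        "y^2 * (real n)^2 - 3 * real n \<le> 2 * real (card Y choose 2)"
        "(1 - x - y)^2 * (real n)^2 - 3 * real n \<le> 2 * real (card Z choose 2)"
      using assms kx ky kz cards by (auto intro!: two_mult_choose_two_ge)
    moreover have "card G1 = (card X choose 2) + (card Y choose 2)"
        "card G2 = (card X choose 2) + (card Z choose 2)"
      unfolding G1_def G2_def using finite disjoint by (auto intro: card_Un_complete_graphs)
    ultimately show "(x^2 + y^2) * (real n)^2 - 6 * real n \<le> 2 * real (card G1)"
        "(x^2 + (1 - x - y)^2) * (real n)^2 - 6 * real n \<le> 2 * real (card G2)"
      by (simp_all add: algebra_simps)
    have card_G3: "card G3 = (n choose 2) - (kx choose 2)"
      unfolding G3_def using finite sub cards by (simp add: card_Diff_complete_graphs)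
    then show "x = 0 \<Longrightarrow> card G3 = n choose 2"
      by (simp add: kx_def numeral_2_eq_2)
    have "kx choose 2 \<le> n choose 2"
      using kxy by (simp add: binomial_right_mono)
    then have "2 * real (card G3) = real n * (real n - 1) - real kx * (real kx - 1)"
      using card_G3 two_mult_choose_two[of n] two_mult_choose_two[of kx] by simp
    moreover have "real kx * (real kx - 1) \<le> (x * n)^2"
    proof -
      have "real kx * real kx \<le> (x * n) * (x * n)"
        using kx by (intro mult_mono) auto
      then show ?thesis by (simp add: power2_eq_square algebra_simps)
    qed
    ultimately show "(1 - x^2) * (real n)^2 - real n \<le> 2 * real (card G3)"
      by (simp add: power2_eq_square algebra_simps)
  qed
qed

lemma edge_threshold_less_if_dense:
  "\<beta> / 2 * (real n)^2 < real (card G) \<Longrightarrow> edge_threshold \<beta> n < real (card G)"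
  unfolding edge_threshold_def by linarith

lemma edge_threshold_less_if_complete:
  "card G = n choose 2 \<Longrightarrow> edge_threshold \<beta> n < real (card G)"
  unfolding edge_threshold_def by simp

lemma forcing_triple_rotate:
  assumes "forcing_triple \<alpha>1 \<alpha>2 \<alpha>3"
  shows "forcing_triple \<alpha>2 \<alpha>3 \<alpha>1"
proof -
  obtain N where forces: "\<And>n G1 G2 G3. n \<ge> N \<Longrightarrow>
      graph_on n G1 \<and> graph_on n G2 \<and> graph_on n G3 \<and>
      real (card G1) > edge_threshold \<alpha>1 n \<and>
      real (card G2) > edge_threshold \<alpha>2 n \<and>
      real (card G3) > edge_threshold \<alpha>3 n \<Longrightarrow> has_rainbow_triangle G1 G2 G3"
    using assms unfolding forcing_triple_def by blast
  have "has_rainbow_triangle G1 G2 G3"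
    if "n \<ge> N" "graph_on n G1 \<and> graph_on n G2 \<and> graph_on n G3 \<and>
      real (card G1) > edge_threshold \<alpha>2 n \<and>
      real (card G2) > edge_threshold \<alpha>3 n \<and>
      real (card G3) > edge_threshold \<alpha>1 n" for n G1 G2 G3
    using forces[of n G3 G1 G2] that by (auto intro: has_rainbow_triangle_rotate)
  then show ?thesis
    unfolding forcing_triple_def by blast
qed

lemma not_forcing_triple_below_block_densities:
  fixes x y \<beta>1 \<beta>2 \<beta>3 :: real
  assumes "0 \<le> x" "0 \<le> y" "x + y \<le> 1"
    and "\<beta>1 < x^2 + y^2" "\<beta>2 < x^2 + (1 - x - y)^2" "\<beta>3 < 1 - x^2 \<or> x = 0"
  shows "\<not> forcing_triple \<beta>1 \<beta>2 \<beta>3"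
proof
  assume "forcing_triple \<beta>1 \<beta>2 \<beta>3"
  then obtain N where forces: "\<And>n G1 G2 G3. n \<ge> N \<Longrightarrow>
      graph_on n G1 \<Longrightarrow> graph_on n G2 \<Longrightarrow> graph_on n G3 \<Longrightarrow>
      real (card G1) > edge_threshold \<beta>1 n \<Longrightarrow>
      real (card G2) > edge_threshold \<beta>2 n \<Longrightarrow>
      real (card G3) > edge_threshold \<beta>3 n \<Longrightarrow> has_rainbow_triangle G1 G2 G3"
    unfolding forcing_triple_def by blast
  \<comment> \<open>For \<open>x = 0\<close> the third class is complete, which exceeds every threshold.\<close>
  have "\<forall>\<^sub>F n in sequentially. x = 0 \<or> 1 * real n < (1 - x^2 - \<beta>3) * (real n)^2"
    using assms(6) eventually_linear_less_quadratic[of "1 - x^2 - \<beta>3" 1]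
    by (auto elim: eventually_mono)
  then have "\<forall>\<^sub>F n in sequentially. n \<ge> N
      \<and> 6 * real n < (x^2 + y^2 - \<beta>1) * (real n)^2
      \<and> 6 * real n < (x^2 + (1 - x - y)^2 - \<beta>2) * (real n)^2
      \<and> (x = 0 \<or> 1 * real n < (1 - x^2 - \<beta>3) * (real n)^2)"
    using assms by (intro eventually_conj eventually_ge_at_top eventually_linear_less_quadratic) auto
  then obtain n where "n \<ge> N"
      and big1: "6 * real n < (x^2 + y^2 - \<beta>1) * (real n)^2"
      and big2: "6 * real n < (x^2 + (1 - x - y)^2 - \<beta>2) * (real n)^2"
      and big3: "x = 0 \<or> 1 * real n < (1 - x^2 - \<beta>3) * (real n)^2"
    using eventually_happens'[OF sequentially_bot] by blast
  obtain G1 G2 G3 where graphs: "graph_on n G1" "graph_on n G2" "graph_on n G3"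
    and no_rainbow: "\<not> has_rainbow_triangle G1 G2 G3"
    and dense1: "(x^2 + y^2) * (real n)^2 - 6 * real n \<le> 2 * real (card G1)"
    and dense2: "(x^2 + (1 - x - y)^2) * (real n)^2 - 6 * real n \<le> 2 * real (card G2)"
    and dense3: "(1 - x^2) * (real n)^2 - real n \<le> 2 * real (card G3)"
    and complete3: "x = 0 \<Longrightarrow> card G3 = n choose 2"
    using block_template_exists assms(1-3) by blast
  have "edge_threshold \<beta>1 n < real (card G1)" "edge_threshold \<beta>2 n < real (card G2)"
    using big1 big2 dense1 dense2 by (auto intro!: edge_threshold_less_if_dense simp: algebra_simps)
  moreover have "edge_threshold \<beta>3 n < real (card G3)"
    using big3 dense3 complete3
    by (auto intro: edge_threshold_less_if_dense edge_threshold_less_if_complete simp: algebra_simps)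
  ultimately show False
    using forces[OF \<open>n \<ge> N\<close> graphs] no_rainbow by blast
qed

lemma not_forcing_triple_if_second_small:
  fixes \<alpha>1 \<alpha>2 \<alpha>3 :: real
  assumes "\<alpha>3 \<le> \<alpha>2" "\<alpha>2 < 1/4"
  shows "\<not> forcing_triple \<alpha>1 \<alpha>2 \<alpha>3"
proof -
  have "\<not> forcing_triple \<alpha>2 \<alpha>3 \<alpha>1"
    using assms by (intro not_forcing_triple_below_block_densities[where x = 0 and y = "1/2"])
      (auto simp: power2_eq_square)
  then show ?thesis
    using forcing_triple_rotate by blast
qed

lemma not_forcing_triple_if_sum_small:
  fixes \<alpha>1 \<alpha>2 \<alpha>3 :: real
  assumes "0 \<le> \<alpha>3" "\<alpha>3 \<le> \<alpha>2" "\<alpha>2 \<le> \<alpha>1" "\<alpha>1 + \<alpha>2 < 1"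
  shows "\<not> forcing_triple \<alpha>1 \<alpha>2 \<alpha>3"
proof -
  define s where "s = (\<alpha>2 + 1 - \<alpha>1) / 2"
  define x where "x = sqrt s"
  have "0 \<le> s" "s \<le> 1"
    using assms by (simp_all add: s_def)
  then have x: "0 \<le> x" "x \<le> 1" "2 * x^2 = \<alpha>2 + 1 - \<alpha>1"
    by (simp_all add: x_def s_def)
  have "\<alpha>2 < x^2"
    using assms x(3) by linarith
  moreover have "\<alpha>3 < x^2 + (1 - x)^2"
    using assms x(3) zero_le_power2[of "1 - x"] by linarith
  moreover have "\<alpha>1 < 1 - x^2"
    using assms x(3) by linarith
  ultimately have "\<not> forcing_triple \<alpha>2 \<alpha>3 \<alpha>1"
    using x(1,2) by (intro not_forcing_triple_below_block_densities[where x = x and y = 0]) simp_all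
  then show ?thesis
    using forcing_triple_rotate by blast
qed

text \<open>This quadratic says that the blocks \<open>(1 - 2 tau, tau, tau)\<close> give equal densities
  \<open>x\<^sup>2 + y\<^sup>2 = 1 - x\<^sup>2 = (1 + tau\<^sup>2) / 2\<close> in the first and third colour.\<close>

lemma tau_root: "9 * tau^2 - 8 * tau + 1 = 0"
  unfolding tau_def by (simp add: power2_eq_square field_simps)

lemma tau_bounds: "0 \<le> tau" "tau \<le> 1/2"
proof -
  have "sqrt 7 \<le> sqrt (4^2)" by (rule real_sqrt_le_mono) simp
  then show "0 \<le> tau" unfolding tau_def by simp
  have "0 \<le> sqrt 7" by simp
  then show "tau \<le> 1/2" unfolding tau_def by (simp add: field_simps)
qed

lemma not_forcing_triple_if_first_small:
  fixes \<alpha>1 \<alpha>2 \<alpha>3 :: real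
  assumes "\<alpha>3 \<le> \<alpha>2" "\<alpha>2 \<le> \<alpha>1" "\<alpha>1 < (1 + tau^2) / 2"
  shows "\<not> forcing_triple \<alpha>1 \<alpha>2 \<alpha>3"
proof (rule not_forcing_triple_below_block_densities[where x = "1 - 2 * tau" and y = tau])
  have "(1 - 2 * tau)^2 + tau^2 = (1 + tau^2) / 2" "1 - (1 - 2 * tau)^2 = (1 + tau^2) / 2"
    using tau_root by (simp_all add: power2_eq_square algebra_simps)
  then show "\<alpha>1 < (1 - 2 * tau)^2 + tau^2" "\<alpha>2 < (1 - 2 * tau)^2 + (1 - (1 - 2 * tau) - tau)^2"
    "\<alpha>3 < 1 - (1 - 2 * tau)^2 \<or> 1 - 2 * tau = 0"
    using assms by auto
  show "0 \<le> 1 - 2 * tau" "0 \<le> tau" "1 - 2 * tau + tau \<le> 1"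
    using tau_bounds by auto
qed

lemma square_sum_increases_under_shift:
  fixes x y s t :: real
  assumes "0 \<le> y" "y \<le> s" "0 < s" "2 * s \<le> x" "0 < t"
  shows "x^2 + y^2 < (x + t * s)^2 + ((1 - t) * y)^2"
proof -
  have "y^2 \<le> s * s"
    using assms by (simp add: power2_eq_square mult_mono)
  moreover have "2 * (s * s) \<le> x * s"
    using assms mult_right_mono[of "2 * s" x s] by simp
  moreover have "0 < s * s"
    using assms by simp
  ultimately have "0 < t * (x * s - y^2)"
    using assms by (intro mult_pos_pos) linarith+
  moreover have "(x + t * s)^2 + ((1 - t) * y)^2 - (x^2 + y^2)
      = 2 * (t * (x * s - y^2)) + (t * s)^2 + (t * y)^2"
    by (simp add: power2_eq_square algebra_simps)
  ultimately show ?thesis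
    using zero_le_power2[of "t * s"] zero_le_power2[of "t * y"] by linarith
qed

lemma exists_larger_block_densities:
  fixes x y z t :: real
  assumes "0 \<le> y" "0 \<le> z" "0 < y + z" "x + y + z = 1" "2 * (y + z) \<le> x"
    and "0 < t" "t \<le> 1"
  obtains x' y' where "0 \<le> x'" "0 \<le> y'" "x' + y' \<le> 1"
    "x^2 + y^2 < x'^2 + y'^2" "x^2 + z^2 < x'^2 + (1 - x' - y')^2" "x'^2 \<le> x^2 + 3 * t"
proof
  define s where "s = y + z"
  have "0 \<le> x" "x \<le> 1" "s \<le> 1"
    using assms by (auto simp: s_def)
  have z': "1 - (x + t * s) - (1 - t) * y = (1 - t) * z"
    using assms(4) by (simp add: s_def algebra_simps)
  have "0 \<le> (1 - t) * z"
    using assms by simp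
  show "x^2 + y^2 < (x + t * s)^2 + ((1 - t) * y)^2"
    by (rule square_sum_increases_under_shift) (use assms in \<open>auto simp: s_def\<close>)
  show "x^2 + z^2 < (x + t * s)^2 + (1 - (x + t * s) - (1 - t) * y)^2"
    unfolding z'
    by (rule square_sum_increases_under_shift) (use assms in \<open>auto simp: s_def\<close>)
  show "0 \<le> x + t * s" "0 \<le> (1 - t) * y"
    using assms by (auto simp: s_def)
  show "x + t * s + (1 - t) * y \<le> 1"
    using z' \<open>0 \<le> (1 - t) * z\<close> by linarith
  have "t * (x * s) \<le> t" "t * (t * (s * s)) \<le> t"
    using assms \<open>0 \<le> x\<close> \<open>x \<le> 1\<close> \<open>s \<le> 1\<close>
    by (auto simp: s_def mult_le_one mult_left_le)
  then show "(x + t * s)^2 \<le> x^2 + 3 * t"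
    by (simp add: power2_eq_square algebra_simps)
qed

lemma not_forcing_triple_at_block_densities:
  fixes \<alpha>1 \<alpha>2 \<alpha>3 x y :: real
  assumes "0 \<le> \<alpha>3" "\<alpha>3 \<le> \<alpha>2" "\<alpha>2 \<le> \<alpha>1"
    and "0 \<le> x" "0 \<le> y" "x + y \<le> 1" "2 * x^2 + (1 - x - y)^2 < 1"
    and "\<alpha>1 = x^2 + y^2" "\<alpha>2 = x^2 + (1 - x - y)^2"
  shows "\<not> forcing_triple \<alpha>1 \<alpha>2 \<alpha>3"
proof (cases "\<alpha>2 < 1/4 \<or> \<alpha>1 + \<alpha>2 < 1")
  case True
  then show ?thesis
    using assms(1-3) not_forcing_triple_if_second_small not_forcing_triple_if_sum_small by blast
next
  case False
  define z where "z = 1 - x - y"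
  have z: "0 \<le> z" "x + y + z = 1" "2 * x^2 + z^2 < 1" "\<alpha>2 = x^2 + z^2"
    using assms by (auto simp: z_def)
  \<comment> \<open>Failure of (b) and (c) forces \<open>x \<ge> 2 (y + z)\<close>, which makes the shift into \<open>X\<close> profitable.\<close>
  have "(x + y + z)^2 \<le> 2 * x^2 + y^2 + z^2"
    using False z assms(8) by simp
  then have key: "2 * (x * (y + z)) + 2 * (y * z) \<le> x^2"
    by (simp add: power2_eq_square algebra_simps)
  have "0 \<le> y * z"
    using assms z by simp
  have "0 < y + z"
  proof (rule ccontr)
    assume "\<not> 0 < y + z"
    then have "x = 1" "z = 0"
      using z assms(5) by auto
    then show False
      using z(3) by simp
  qed
  have "0 < x"
  proof (rule ccontr)
    assume "\<not> 0 < x"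
    then have "x = 0" "y * z = 0"
      using key \<open>0 \<le> y * z\<close> assms(4) by auto
    then show False
      using False z assms by auto
  qed
  have "x * (2 * (y + z)) \<le> x * x"
    using key \<open>0 \<le> y * z\<close> by (simp add: power2_eq_square algebra_simps)
  then have "2 * (y + z) \<le> x"
    using \<open>0 < x\<close> by simp
  define t where "t = (1 - 2 * x^2 - z^2) / 6"
  have "6 * t = 1 - 2 * x^2 - z^2"
    by (simp add: t_def)
  then have "0 < t" "t \<le> 1"
    using z(3) zero_le_power2[of x] zero_le_power2[of z] by linarith+
  obtain x' y' where "0 \<le> x'" "0 \<le> y'" "x' + y' \<le> 1"
      "x^2 + y^2 < x'^2 + y'^2" "x^2 + z^2 < x'^2 + (1 - x' - y')^2" "x'^2 \<le> x^2 + 3 * t"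
    using exists_larger_block_densities[OF assms(5) z(1) \<open>0 < y + z\<close> z(2)
        \<open>2 * (y + z) \<le> x\<close> \<open>0 < t\<close> \<open>t \<le> 1\<close>] .
  moreover have "\<alpha>3 < 1 - x'^2"
    using \<open>x'^2 \<le> x^2 + 3 * t\<close> \<open>6 * t = 1 - 2 * x^2 - z^2\<close> \<open>0 < t\<close> assms(2) z(4)
    by linarith
  ultimately show ?thesis
    using assms(8) z(4) by (intro not_forcing_triple_below_block_densities[of x' y']) auto
qed

theorem mainTheorem4:
  fixes \<alpha>1 \<alpha>2 \<alpha>3 :: real
  assumes "0 \<le> \<alpha>3" "\<alpha>3 \<le> \<alpha>2" "\<alpha>2 \<le> \<alpha>1" "\<alpha>1 \<le> 1"
  assumes "\<alpha>1 < (1 + tau^2) / 2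
        \<or> \<alpha>2 < 1/4
        \<or> \<alpha>1 + \<alpha>2 < 1
        \<or> (\<exists>x y :: real. 0 \<le> x \<and> 0 \<le> y \<and> x + y \<le> 1 \<and>
              2 * x^2 + (1 - x - y)^2 < 1 \<and>
              \<alpha>1 = x^2 + y^2 \<and> \<alpha>2 = x^2 + (1 - x - y)^2)"
  shows "\<not> forcing_triple \<alpha>1 \<alpha>2 \<alpha>3"
  using assms(5)
proof (elim disjE exE conjE)
  assume "\<alpha>1 < (1 + tau^2) / 2"
  then show ?thesis
    using assms(2,3) not_forcing_triple_if_first_small by blast
next
  assume "\<alpha>2 < 1/4"
  then show ?thesis
    using assms(2) not_forcing_triple_if_second_small by blast
next
  assume "\<alpha>1 + \<alpha>2 < 1"
  then show ?thesis
    using assms(1-3) not_forcing_triple_if_sum_small by blast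
next
  fix x y :: real
  assume "0 \<le> x" "0 \<le> y" "x + y \<le> 1" "2 * x^2 + (1 - x - y)^2 < 1"
    "\<alpha>1 = x^2 + y^2" "\<alpha>2 = x^2 + (1 - x - y)^2"
  then show ?thesis
    using assms(1-3) by (intro not_forcing_triple_at_block_densities)
qed

end
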